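(* Let $n\ge2$ be an integer and let $A_1,\dots,A_{2n}$ be (not necessarily distinct) points in $\mathbb{R}^m$; set $A_{2n+1}=A_1$. Let $G_1$ be the centroid of the odd-indexed points $A_1,A_3,\dots,A_{2n-1}$ and $G_2$ the centroid of the even-indexed points $A_2,A_4,\dots,A_{2n}$. Then $$\sum_{i=1}^{2n}|A_iA_{i+1}|^2=\sum_{\substack{1\le i<j\le 2n\\ 1<j-i<2n-1}}(-1)^{j-i}|A_iA_j|^2+n^2|G_1G_2|^2.$$ In particular, for $n=2$ this is the identity $|A_1A_2|^2+|A_2A_3|^2+|A_3A_4|^2+|A_4A_1|^2=|A_1A_3|^2+|A_2A_4|^2+4|LM|^2$, where $L,M$ are the midpoints of $A_1A_3$ and $A_2A_4$.
   Context: $|XY|$ denotes the Euclidean distance in $\mathbb{R}^m$; the centroid of points $B_1,\dots,B_r$ is the point with position vector $\frac1r\sum_k B_k$. *)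

theory Defs
  imports "HOL-Analysis.Analysis"
begin

end

theory Submission
  imports Defs
begin

(*
  With the weights w_i = (-1)^i, which sum to zero over 1..2n, expanding the squares gives
  sum_{i<j} w_i w_j |A_i A_j|^2 = - |sum_i w_i A_i|^2, and sum_i w_i A_i = n (G2 - G1).
  Among the pairs i < j, those with j = i + 1 together with (1, 2n) are exactly the sides of the
  closed polygon, all carrying the sign -1; moving them to the other side gives the identity.
*)

lemma sum_symmetric_eq_twice_sum_less:
  fixes g :: "'i::linorder \<Rightarrow> 'i \<Rightarrow> 'b::comm_semiring_1"
  assumes "finite I" and sym: "\<And>i j. g i j = g j i" and diag: "\<And>i. g i i = 0"
  shows "(\<Sum>i\<in>I. \<Sum>j\<in>I. g i j) = 2 * (\<Sum>i\<in>I. \<Sum>j\<in>{j\<in>I. i < j}. g i j)"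
proof -
  have row: "(\<Sum>j\<in>I. g i j) = (\<Sum>j\<in>{j\<in>I. i < j}. g i j) + (\<Sum>j\<in>{j\<in>I. j < i}. g i j)" for i
  proof -
    have "(\<Sum>j\<in>I. g i j) = (\<Sum>j\<in>{j\<in>I. i < j} \<union> {j\<in>I. j < i} \<union> {j\<in>I. j = i}. g i j)"
      by (rule sum.cong) auto
    also have "\<dots> = (\<Sum>j\<in>{j\<in>I. i < j}. g i j) + (\<Sum>j\<in>{j\<in>I. j < i}. g i j)"
      using \<open>finite I\<close> by (subst sum.union_disjoint; auto simp: diag)+
    finally show ?thesis .
  qed
  have "(\<Sum>i\<in>I. \<Sum>j\<in>{j\<in>I. j < i}. g i j) = (\<Sum>j\<in>I. \<Sum>i\<in>{i\<in>I. j < i}. g i j)"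
    by (rule sum.swap_restrict[OF \<open>finite I\<close> \<open>finite I\<close>])
  also have "\<dots> = (\<Sum>i\<in>I. \<Sum>j\<in>{j\<in>I. i < j}. g i j)"
    by (simp add: sym)
  finally show ?thesis
    by (simp add: row sum.distrib mult_2)
qed

lemma sum_sum_weighted_norm_diff_sq:
  fixes x :: "'i \<Rightarrow> 'a::real_inner" and w :: "'i \<Rightarrow> real"
  assumes "sum w I = 0"
  shows "(\<Sum>i\<in>I. \<Sum>j\<in>I. w i * w j * (norm (x i - x j))\<^sup>2) = -2 * (norm (\<Sum>i\<in>I. w i *\<^sub>R x i))\<^sup>2"
proof -
  have expand: "(norm (a - b))\<^sup>2 = (norm a)\<^sup>2 + (norm b)\<^sup>2 - 2 * inner a b" for a b :: 'a
    by (simp add: power2_norm_eq_inner inner_diff inner_commute)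
  have left: "(\<Sum>i\<in>I. \<Sum>j\<in>I. w i * w j * (norm (x i))\<^sup>2) = 0"
    by (simp add: mult.commute mult.left_commute flip: sum_distrib_left sum_distrib_right add: assms)
  have right: "(\<Sum>i\<in>I. \<Sum>j\<in>I. w i * w j * (norm (x j))\<^sup>2) = 0"
    by (simp add: mult.assoc flip: sum_distrib_left sum_distrib_right add: assms)
  have cross: "(norm (\<Sum>i\<in>I. w i *\<^sub>R x i))\<^sup>2 = (\<Sum>i\<in>I. \<Sum>j\<in>I. w i * w j * inner (x i) (x j))"
    by (simp add: power2_norm_eq_inner inner_sum_left inner_sum_right sum_distrib_left mult.assoc inner_commute mult.left_commute)
  have "(\<Sum>i\<in>I. \<Sum>j\<in>I. w i * w j * (norm (x i - x j))\<^sup>2)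
      = (\<Sum>i\<in>I. \<Sum>j\<in>I. w i * w j * (norm (x i))\<^sup>2) + (\<Sum>i\<in>I. \<Sum>j\<in>I. w i * w j * (norm (x j))\<^sup>2)
        - 2 * (\<Sum>i\<in>I. \<Sum>j\<in>I. w i * w j * inner (x i) (x j))"
    by (simp add: expand algebra_simps sum.distrib sum_subtractf sum_distrib_left)
  then show ?thesis
    by (simp add: left right cross)
qed

lemma sum_less_weighted_norm_diff_sq:
  fixes x :: "'i::linorder \<Rightarrow> 'a::real_inner" and w :: "'i \<Rightarrow> real"
  assumes "finite I" and "sum w I = 0"
  shows "(\<Sum>i\<in>I. \<Sum>j\<in>{j\<in>I. i < j}. w i * w j * (norm (x i - x j))\<^sup>2) = - (norm (\<Sum>i\<in>I. w i *\<^sub>R x i))\<^sup>2"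
proof -
  have "(\<Sum>i\<in>I. \<Sum>j\<in>I. w i * w j * (norm (x i - x j))\<^sup>2)
      = 2 * (\<Sum>i\<in>I. \<Sum>j\<in>{j\<in>I. i < j}. w i * w j * (norm (x i - x j))\<^sup>2)"
    using \<open>finite I\<close> by (rule sum_symmetric_eq_twice_sum_less) (simp_all add: norm_minus_commute)
  with sum_sum_weighted_norm_diff_sq[OF \<open>sum w I = 0\<close>, of x] show ?thesis
    by simp
qed

lemma minus_one_power_add_eq_power_diff:
  assumes "i \<le> j"
  shows "(-1::'a::ring_1) ^ (i + j) = (-1) ^ (j - i)"
proof -
  have "i + j = (j - i) + 2 * i" using assms by simp
  then have "(-1::'a) ^ (i + j) = (-1) ^ (j - i) * ((-1) ^ 2) ^ i"
    by (simp only: power_add power_mult)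
  then show ?thesis by simp
qed

lemma sum_atLeast1_in_pairs:
  fixes f :: "nat \<Rightarrow> 'b::comm_monoid_add"
  shows "(\<Sum>i=1..2*n. f i) = (\<Sum>k=1..n. f (2*k - 1) + f (2*k))"
proof (induction n)
  case 0
  then show ?case by simp
next
  case (Suc n)
  have "{1..2 * Suc n} = {1..2*n} \<union> {2*n + 1, 2*n + 2}" by auto
  then have "(\<Sum>i=1..2 * Suc n. f i) = (\<Sum>i=1..2*n. f i) + (f (2*n + 1) + f (2*n + 2))"
    by (simp add: sum.union_disjoint add_ac)
  with Suc show ?case by (simp add: add.commute)
qed

lemma sum_alternating_eq_even_minus_odd:
  fixes A :: "nat \<Rightarrow> 'a::real_vector"
  shows "(\<Sum>i=1..2*n. (-1::real) ^ i *\<^sub>R A i) = (\<Sum>k=1..n. A (2*k)) - (\<Sum>k=1..n. A (2*k - 1))"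
proof -
  have "(-1::real) ^ (2*k - 1) = -1" if "k \<ge> 1" for k
    using that by (simp add: odd_pos)
  then show ?thesis
    by (subst sum_atLeast1_in_pairs) (simp add: sum.distrib sum_subtractf)
qed

lemma sum_less_pairs_cyclic_split:
  fixes f :: "nat \<Rightarrow> nat \<Rightarrow> 'b::comm_monoid_add"
  assumes "m \<ge> 3"
  shows "(\<Sum>i=1..m. \<Sum>j\<in>{j\<in>{1..m}. i < j}. f i j)
       = (\<Sum>i=1..m. \<Sum>j\<in>{j. i < j \<and> j \<le> m \<and> 1 < j - i \<and> j - i < m - 1}. f i j)
         + (\<Sum>i=1..<m. f i (i + 1)) + f 1 m"
proof -
  define T where "T i = {j. i < j \<and> j \<le> m \<and> 1 < j - i \<and> j - i < m - 1}" for i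
  have row: "(\<Sum>j\<in>{j\<in>{1..m}. i < j}. f i j)
      = (\<Sum>j\<in>T i. f i j) + (if i < m then f i (i + 1) else 0) + (if i = 1 then f 1 m else 0)"
    if i: "i \<in> {1..m}" for i
  proof -
    consider "i = 1" | "1 < i" "i < m" | "i = m"
      using i by fastforce
    then show ?thesis
    proof cases
      case 1
      then have "{j\<in>{1..m}. i < j} = T i \<union> {i + 1} \<union> {m}" "T i = {3..m - 1}"
        using assms by (auto simp: T_def)
      with 1 assms show ?thesis by (simp add: sum.union_disjoint add.commute)
    next
      case 2
      then have "{j\<in>{1..m}. i < j} = T i \<union> {i + 1}" "T i = {i + 2..m}"
        by (auto simp: T_def)
      with 2 show ?thesis by (simp add: sum.union_disjoint add.commute)
    next
      case 3
      then have "{j\<in>{1..m}. i < j} = {}" "T i = {}"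
        by (auto simp: T_def)
      then show ?thesis
        by (simp only: sum.empty) (use 3 assms in simp)
    qed
  qed
  have "(\<Sum>i=1..m. \<Sum>j\<in>{j\<in>{1..m}. i < j}. f i j)
      = (\<Sum>i=1..m. (\<Sum>j\<in>T i. f i j) + (if i < m then f i (i + 1) else 0) + (if i = 1 then f 1 m else 0))"
    by (intro sum.cong refl row)
  also have "\<dots> = (\<Sum>i=1..m. \<Sum>j\<in>T i. f i j) + (\<Sum>i=1..<m. f i (i + 1)) + f 1 m"
  proof -
    have "(\<Sum>i=1..m. if i < m then f i (i + 1) else 0) = (\<Sum>i=1..<m. if i < m then f i (i + 1) else 0)"
      using assms by (simp add: sum.last_plus)
    also have "\<dots> = (\<Sum>i=1..<m. f i (i + 1))"
      by (rule sum.cong) auto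
    finally show ?thesis
      using assms by (simp add: sum.distrib)
  qed
  finally show ?thesis
    by (simp only: T_def)
qed

theorem corollary3p1:
  fixes A :: "nat \<Rightarrow> 'a::euclidean_space" and n :: nat
  assumes "n \<ge> 2"
    and "A (2*n + 1) = A 1"
  defines "G1 \<equiv> (1 / real n) *\<^sub>R (\<Sum>k=1..n. A (2*k - 1))"
    and "G2 \<equiv> (1 / real n) *\<^sub>R (\<Sum>k=1..n. A (2*k))"
  shows "(\<Sum>i=1..2*n. (dist (A i) (A (i+1)))\<^sup>2) =
         (\<Sum>i=1..2*n. \<Sum>j\<in>{j. i < j \<and> j \<le> 2*n \<and> 1 < j - i \<and> j - i < 2*n - 1}.
             (-1::real) ^ (j - i) * (dist (A i) (A j))\<^sup>2)
         + (real n)\<^sup>2 * (dist G1 G2)\<^sup>2"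
proof -
  define V where "V = (\<Sum>i=1..2*n. (-1::real) ^ i *\<^sub>R A i)"
  define g where "g i j = (-1::real) ^ i * (-1) ^ j * (dist (A i) (A j))\<^sup>2" for i j
  have "(\<Sum>i=1..2*n. (-1::real) ^ i) = 0"
    using sum_alternating_eq_even_minus_odd[of "\<lambda>_. 1::real" n] by simp
  then have pairs: "(\<Sum>i=1..2*n. \<Sum>j\<in>{j\<in>{1..2*n}. i < j}. g i j) = - (norm V)\<^sup>2"
    unfolding g_def V_def dist_norm by (rule sum_less_weighted_norm_diff_sq[rotated]) simp
  have sign: "g i j = (-1) ^ (j - i) * (dist (A i) (A j))\<^sup>2" if "i < j" for i j
    using minus_one_power_add_eq_power_diff[of i j, where 'a=real] that by (simp add: g_def power_add)
  have "V = (\<Sum>k=1..n. A (2*k)) - (\<Sum>k=1..n. A (2*k - 1))"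
    unfolding V_def by (rule sum_alternating_eq_even_minus_odd)
  also have "\<dots> = real n *\<^sub>R (G2 - G1)"
    using assms(1) by (simp add: G1_def G2_def scaleR_diff_right)
  finally have centroids: "(real n)\<^sup>2 * (dist G1 G2)\<^sup>2 = (norm V)\<^sup>2"
    by (simp add: dist_norm norm_minus_commute power_mult_distrib)
  have cycle: "(\<Sum>i=1..<2*n. g i (i + 1)) + g 1 (2*n) = - (\<Sum>i=1..2*n. (dist (A i) (A (i+1)))\<^sup>2)"
    using assms by (simp add: sign sum.last_plus sum_negf dist_commute)
  have "(\<Sum>i=1..2*n. \<Sum>j\<in>{j\<in>{1..2*n}. i < j}. g i j)
      = (\<Sum>i=1..2*n. \<Sum>j\<in>{j. i < j \<and> j \<le> 2*n \<and> 1 < j - i \<and> j - i < 2*n - 1}.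
             (-1::real) ^ (j - i) * (dist (A i) (A j))\<^sup>2) - (\<Sum>i=1..2*n. (dist (A i) (A (i+1)))\<^sup>2)"
    using sum_less_pairs_cyclic_split[of "2*n" g] assms(1) cycle by (simp add: sign)
  with pairs centroids show ?thesis
    by linarith
qed

end
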